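(* Let $n\ge 4$ and let $G'_n$ be the directed graph with nodes $0,\dots,n-1$ and arcs: $i\to i+1$ for $0\le i\le n-5$; $(n-4)\to(n-3)$; $(n-4)\to(n-1)$; $(n-1)\to(n-2)$; $(n-2)\to(n-1)$; and $j\to 0$ for every $1\le j\le n-1$. For $\pi\in S_n$, the following are equivalent: (1) $\pi\in\mathcal P_n$; (2) $\pi$ is representable by $G'_n$.
   Context: $d_G(x,y)$ is the shortest directed path length from $x$ to $y$ ($\infty$ if none). The distance-count matrix $C_G\in\mathbb{R}^{n\times n}$ has $(C_G)_{i,k}=|\{j: d_G(j,i)=k\}|$. For $\mathbf a\in\mathbb{R}^{\mathbb{N}}$ (with $a_0$ arbitrary) the linear centrality is $f^{\mathbf a}_G(i)=\sum_{k=0}^{n-1}(C_G)_{i,k}a_k$. A permutation $\pi$ of $\{0,\dots,n-1\}$ is representable by $G$ if there is $\mathbf a$ with $f^{\mathbf a}_G(\pi(0))>f^{\mathbf a}_G(\pi(1))>\dots>f^{\mathbf a}_G(\pi(n-1))$. $\mathcal P_n$ is the set of permutations $\pi$ such that, with $\rho=\pi^{-1}$, one of: (1) $2\le\rho(n-1)\le n-3$; (2) $\rho(n-1)=1$ and $\rho(n-2)\ne0$; (3) $\rho(n-1)=n-2$ and $\rho(n-2)\ne n-1$. *)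

theory Defs
  imports "HOL-Combinatorics.Permutations" "HOL-Library.Extended_Nat"
begin

definition gdist :: "(nat \<times> nat) set \<Rightarrow> nat \<Rightarrow> nat \<Rightarrow> enat" where
  "gdist E x y = (if \<exists>k. (x, y) \<in> E ^^ k then enat (LEAST k. (x, y) \<in> E ^^ k) else \<infinity>)"

definition dcount :: "(nat \<times> nat) set \<Rightarrow> nat \<Rightarrow> nat \<Rightarrow> nat \<Rightarrow> nat" where
  "dcount E n i k = card {j \<in> {..<n}. gdist E j i = enat k}"

definition lincent :: "(nat \<times> nat) set \<Rightarrow> nat \<Rightarrow> (nat \<Rightarrow> real) \<Rightarrow> nat \<Rightarrow> real" where
  "lincent E n a i = (\<Sum>k<n. real (dcount E n i k) * a k)"

definition representable :: "(nat \<times> nat) set \<Rightarrow> nat \<Rightarrow> (nat \<Rightarrow> nat) \<Rightarrow> bool" where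
  "representable E n \<pi> \<longleftrightarrow>
     (\<exists>a :: nat \<Rightarrow> real. \<forall>t. Suc t < n \<longrightarrow> lincent E n a (\<pi> t) > lincent E n a (\<pi> (Suc t)))"

definition inP :: "nat \<Rightarrow> (nat \<Rightarrow> nat) \<Rightarrow> bool" where
  "inP n \<pi> \<longleftrightarrow> (let \<rho> = inv \<pi> in
      (2 \<le> \<rho> (n - 1) \<and> \<rho> (n - 1) + 3 \<le> n)
    \<or> (\<rho> (n - 1) = 1 \<and> \<rho> (n - 2) \<noteq> 0)
    \<or> (\<rho> (n - 1) = n - 2 \<and> \<rho> (n - 2) \<noteq> n - 1))"

definition Gp :: "nat \<Rightarrow> (nat \<times> nat) set" where
  "Gp n = {(i, i + 1) | i. i + 5 \<le> n}
        \<union> {(n - 4, n - 3), (n - 4, n - 1), (n - 1, n - 2), (n - 2, n - 1)}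
        \<union> {(j, 0) | j. 1 \<le> j \<and> j \<le> n - 1}"

end

(* Write n = p + 4: the nodes 0, ..., p + 1 form the path 0 -> ... -> p + 1, and p + 2 = n - 2,
   p + 3 = n - 1 form a 2-cycle entered from p.  All distances in G'_n are explicit, so the
   centrality of node i is F(i) = sum_j a(d(j, i)).  Since
   F(m + 1) - F(m) = (p + 2 - m) (a(m + 2) - a(m + 1)) for m <= p + 1, the values
   F(0), ..., F(n - 2) can be prescribed arbitrarily; but F(n - 1) is a convex combination of
   F(0), ..., F(n - 3) with strictly positive weights independent of a.  Hence node n - 1 can be
   ranked anywhere except above all or below all of 0, ..., n - 3, which is exactly the condition
   defining P_n. *)

theory Submission
  imports Defs
begin

lemma gdist_eqI:
  fixes E :: "(nat \<times> nat) set" and \<delta> :: "nat \<Rightarrow> nat"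
  assumes "\<delta> j = 0"
    and arc: "\<And>x y. (x, y) \<in> E \<Longrightarrow> \<delta> y \<le> \<delta> x + 1"
    and pred: "\<And>y. y \<in> V \<Longrightarrow> y \<noteq> j \<Longrightarrow> \<exists>x \<in> V. (x, y) \<in> E \<and> \<delta> x + 1 = \<delta> y"
    and "y \<in> V"
  shows "gdist E j y = enat (\<delta> y)"
proof -
  have walk_length: "\<delta> z \<le> k" if "(j, z) \<in> E ^^ k" for z k
    using that
  proof (induction k arbitrary: z)
    case 0
    then show ?case using \<open>\<delta> j = 0\<close> by simp
  next
    case (Suc k)
    then obtain x where "(j, x) \<in> E ^^ k" "(x, z) \<in> E" by auto
    with Suc.IH arc show ?case by fastforce
  qed
  have reach: "(j, z) \<in> E ^^ \<delta> z" if "z \<in> V" for z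
    using that
  proof (induction "\<delta> z" arbitrary: z)
    case 0
    then have "z = j" using pred by fastforce
    then show ?case using \<open>\<delta> j = 0\<close> by simp
  next
    case (Suc m)
    then have "z \<noteq> j" using \<open>\<delta> j = 0\<close> by auto
    with pred Suc.prems obtain x where "x \<in> V" "(x, z) \<in> E" "\<delta> x + 1 = \<delta> z" by blast
    moreover from this Suc.hyps(2) have "\<delta> x = m" by simp
    ultimately have "(j, x) \<in> E ^^ m" using Suc.hyps(1) by blast
    then show ?case using \<open>(x, z) \<in> E\<close> Suc.hyps(2)[symmetric] by auto
  qed
  have "(LEAST k. (j, y) \<in> E ^^ k) = \<delta> y"
    using reach[OF \<open>y \<in> V\<close>] walk_length by (intro Least_equality) auto
  then show ?thesis using reach[OF \<open>y \<in> V\<close>] unfolding gdist_def by auto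
qed

lemma lincent_eq_sum:
  assumes "\<And>j. j < n \<Longrightarrow> gdist E j i = enat (\<delta> j)" and "\<And>j. j < n \<Longrightarrow> \<delta> j < n"
  shows "lincent E n a i = (\<Sum>j<n. a (\<delta> j))"
proof -
  have "lincent E n a i = (\<Sum>k<n. \<Sum>j\<in>{j \<in> {..<n}. \<delta> j = k}. a (\<delta> j))"
    unfolding lincent_def dcount_def using assms(1) by (intro sum.cong refl) (simp cong: conj_cong)
  also have "\<dots> = (\<Sum>j<n. a (\<delta> j))"
    using assms(2) by (intro sum.group) auto
  finally show ?thesis .
qed

lemma representable_iff_ranking:
  assumes "\<pi> permutes {..<n}"
  shows "representable E n \<pi> \<longleftrightarrow>
    (\<exists>a. \<forall>v<n. \<forall>w<n. inv \<pi> v < inv \<pi> w \<longrightarrow> lincent E n a w < lincent E n a v)"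
proof -
  have in_range: "x < n \<longleftrightarrow> \<pi> x < n" "x < n \<longleftrightarrow> inv \<pi> x < n" for x
    using permutes_in_image[OF assms] permutes_in_image[OF permutes_inv[OF assms]] by auto
  have "(\<forall>t. Suc t < n \<longrightarrow> f (\<pi> (Suc t)) < f (\<pi> t)) \<longleftrightarrow>
        (\<forall>v<n. \<forall>w<n. inv \<pi> v < inv \<pi> w \<longrightarrow> f w < f v)" for f :: "nat \<Rightarrow> real"
  proof
    assume step: "\<forall>t. Suc t < n \<longrightarrow> f (\<pi> (Suc t)) < f (\<pi> t)"
    have chain: "s < t \<Longrightarrow> t < n \<Longrightarrow> f (\<pi> t) < f (\<pi> s)" for s t
      by (induction s t rule: less_Suc_induct) (use step in \<open>auto dest: order.strict_trans\<close>)
    show "\<forall>v<n. \<forall>w<n. inv \<pi> v < inv \<pi> w \<longrightarrow> f w < f v"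
      using chain[of "inv \<pi> _" "inv \<pi> _"] in_range by (simp add: permutes_inverses[OF assms])
  next
    assume "\<forall>v<n. \<forall>w<n. inv \<pi> v < inv \<pi> w \<longrightarrow> f w < f v"
    then show "\<forall>t. Suc t < n \<longrightarrow> f (\<pi> (Suc t)) < f (\<pi> t)"
      using in_range by (auto simp: permutes_inverses[OF assms])
  qed
  then show ?thesis unfolding representable_def by simp
qed

lemma sum_by_parts:
  fixes S f :: "nat \<Rightarrow> 'a::comm_ring"
  shows "(\<Sum>i<Suc m. (S i - S (Suc i)) * f i)
    = S 0 * f 0 + (\<Sum>i<m. S (Suc i) * (f (Suc i) - f i)) - S (Suc m) * f m"
  by (induction m) (simp_all add: algebra_simps)

lemma sum_weighted_increments:
  fixes b :: "nat \<Rightarrow> real"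
  shows "(\<Sum>i<m. real (m - i) * (b (Suc i) - b i)) = (\<Sum>i<m. b (Suc i)) - real m * b 0"
proof (induction m)
  case 0
  then show ?case by simp
next
  case (Suc m)
  have "(\<Sum>i<Suc m. real (Suc m - i) * (b (Suc i) - b i))
      = (\<Sum>i<Suc m. real (m - i) * (b (Suc i) - b i)) + (\<Sum>i<Suc m. b (Suc i) - b i)"
    by (simp add: sum.distrib[symmetric] Suc_diff_le algebra_simps)
  also have "\<dots> = (\<Sum>i<m. real (m - i) * (b (Suc i) - b i)) + (b (Suc m) - b 0)"
    by (simp add: sum_lessThan_telescope)
  finally show ?case using Suc.IH by (simp add: algebra_simps)
qed

lemma convex_sum_bounds:
  fixes w x :: "'a \<Rightarrow> real"
  assumes "\<And>i. i \<in> A \<Longrightarrow> 0 \<le> w i" and "sum w A = 1"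
    and "\<And>i. i \<in> A \<Longrightarrow> L \<le> x i \<and> x i \<le> U"
  shows "L \<le> (\<Sum>i\<in>A. w i * x i)" and "(\<Sum>i\<in>A. w i * x i) \<le> U"
proof -
  have "(\<Sum>i\<in>A. w i * L) \<le> (\<Sum>i\<in>A. w i * x i)" "(\<Sum>i\<in>A. w i * x i) \<le> (\<Sum>i\<in>A. w i * U)"
    using assms(1,3) by (auto intro!: sum_mono mult_left_mono)
  then show "L \<le> (\<Sum>i\<in>A. w i * x i)" and "(\<Sum>i\<in>A. w i * x i) \<le> U"
    using assms(2) by (simp_all add: sum_distrib_right[symmetric])
qed

lemma convex_sum_less:
  fixes w x :: "'a \<Rightarrow> real"
  assumes "finite A" and "\<And>i. i \<in> A \<Longrightarrow> 0 < w i" and "sum w A = 1"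
    and "\<And>i. i \<in> A \<Longrightarrow> x i \<le> B" and "k \<in> A" and "x k < B"
  shows "(\<Sum>i\<in>A. w i * x i) < B"
proof -
  have "(\<Sum>i\<in>A. w i * x i) < (\<Sum>i\<in>A. w i * B)"
    using assms by (intro sum_strict_mono_ex1) (auto intro!: mult_left_mono less_imp_le)
  then show ?thesis using assms(3) by (simp add: sum_distrib_right[symmetric])
qed

lemma convex_sum_greater:
  fixes w x :: "'a \<Rightarrow> real"
  assumes "finite A" and "\<And>i. i \<in> A \<Longrightarrow> 0 < w i" and "sum w A = 1"
    and "\<And>i. i \<in> A \<Longrightarrow> B \<le> x i" and "k \<in> A" and "B < x k"
  shows "B < (\<Sum>i\<in>A. w i * x i)"
  using convex_sum_less[of A w "\<lambda>i. - x i" "- B" k] assms by (simp add: sum_negf)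

lemma Gp_altdef:
  "Gp (p + 4) = {(i, Suc i) | i. i \<le> p} \<union> {(p, p + 3), (p + 3, p + 2), (p + 2, p + 3)}
     \<union> {(j, 0) | j. 1 \<le> j \<and> j \<le> p + 3}"
  unfolding Gp_def by (auto simp: numeral_eq_Suc)

text \<open>Shortest paths to a node \<open>i \<le> p + 1\<close> follow the path \<open>0 \<rightarrow> \<dots> \<rightarrow> i\<close>, restarting at 0
  if \<open>j > i\<close>; the 2-cycle \<open>{p + 2, p + 3}\<close> is entered through the arc \<open>p \<rightarrow> p + 3\<close>.\<close>

definition dist_Gp :: "nat \<Rightarrow> nat \<Rightarrow> nat \<Rightarrow> nat" where
  "dist_Gp p j i =
    (if i \<le> p + 1 then (if j \<le> i then i - j else i + 1)
     else if j = i then 0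
     else if p + 2 \<le> j then 1
     else (if j = p + 1 then p + 2 else p + 1 - j) + (if i = p + 2 then 1 else 0))"

lemma dist_Gp_arc: "(x, y) \<in> Gp (p + 4) \<Longrightarrow> dist_Gp p j y \<le> dist_Gp p j x + 1"
  unfolding Gp_altdef dist_Gp_def by auto

lemma dist_Gp_pred:
  assumes "j < p + 4" "y < p + 4" "y \<noteq> j"
  shows "\<exists>x \<in> {..<p + 4}. (x, y) \<in> Gp (p + 4) \<and> dist_Gp p j x + 1 = dist_Gp p j y"
proof -
  consider "y = 0" | "1 \<le> y" "y \<le> p + 1" | "y = p + 2"
    | "y = p + 3" "j = p + 2" | "y = p + 3" "j \<noteq> p + 2"
    using assms by linarith
  then show ?thesis
  proof cases
    case 1
    then show ?thesis using assms by (intro bexI[of _ j]) (auto simp: Gp_altdef dist_Gp_def)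
  next
    case 2
    then show ?thesis using assms by (intro bexI[of _ "y - 1"]) (auto simp: Gp_altdef dist_Gp_def)
  next
    case 3
    then show ?thesis using assms by (intro bexI[of _ "p + 3"]) (auto simp: Gp_altdef dist_Gp_def)
  next
    case 4
    then show ?thesis by (intro bexI[of _ "p + 2"]) (auto simp: Gp_altdef dist_Gp_def)
  next
    case 5
    then show ?thesis using assms by (intro bexI[of _ p]) (auto simp: Gp_altdef dist_Gp_def)
  qed
qed

lemma gdist_Gp:
  assumes "j < p + 4" "i < p + 4"
  shows "gdist (Gp (p + 4)) j i = enat (dist_Gp p j i)"
  using assms dist_Gp_arc dist_Gp_pred
  by (intro gdist_eqI[where V = "{..<p + 4}"]) (auto simp: dist_Gp_def)

definition cent_Gp :: "nat \<Rightarrow> (nat \<Rightarrow> real) \<Rightarrow> nat \<Rightarrow> real" where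
  "cent_Gp p a i = (\<Sum>j<p + 4. a (dist_Gp p j i))"

lemma lincent_Gp: "i < p + 4 \<Longrightarrow> lincent (Gp (p + 4)) (p + 4) a i = cent_Gp p a i"
  unfolding cent_Gp_def by (rule lincent_eq_sum) (auto simp: gdist_Gp dist_Gp_def)

lemma cent_Gp_path:
  assumes "i \<le> p + 1"
  shows "cent_Gp p a i = (\<Sum>k<Suc i. a k) + real (p + 3 - i) * a (Suc i)"
proof -
  have "{..<p + 4} = {..<Suc i} \<union> {Suc i..<p + 4}" using assms by auto
  then have "cent_Gp p a i
      = (\<Sum>j<Suc i. a (dist_Gp p j i)) + (\<Sum>j\<in>{Suc i..<p + 4}. a (dist_Gp p j i))"
    unfolding cent_Gp_def
    by (metis finite_atLeastLessThan finite_lessThan ivl_disj_int_one(2) sum.union_disjoint)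
  also have "(\<Sum>j<Suc i. a (dist_Gp p j i)) = (\<Sum>j<Suc i. a (Suc i - Suc j))"
    using assms by (intro sum.cong refl) (auto simp: dist_Gp_def)
  also have "\<dots> = (\<Sum>k<Suc i. a k)"
    by (rule sum.nat_diff_reindex)
  also have "(\<Sum>j\<in>{Suc i..<p + 4}. a (dist_Gp p j i)) = real (p + 3 - i) * a (Suc i)"
    using assms by (simp add: dist_Gp_def)
  finally show ?thesis .
qed

lemma cent_Gp_split_sources:
  "cent_Gp p a i = (\<Sum>j<Suc p. a (dist_Gp p j i))
     + a (dist_Gp p (p + 1) i) + a (dist_Gp p (p + 2) i) + a (dist_Gp p (p + 3) i)"
  unfolding cent_Gp_def by (simp add: numeral_eq_Suc)

lemma cent_Gp_p_plus_2: "cent_Gp p a (p + 2) = (\<Sum>k<p + 4. a k)"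
proof -
  have "(\<Sum>j<Suc p. a (dist_Gp p j (p + 2))) = (\<Sum>j<Suc p. a (Suc p - Suc j + 2))"
    by (intro sum.cong refl) (auto simp: dist_Gp_def Suc_diff_le)
  also have "\<dots> = (\<Sum>k<Suc p. a (k + 2))"
    by (rule sum.nat_diff_reindex)
  also have "(\<Sum>k<Suc p. a (k + 2)) = (\<Sum>k<p + 4. a k) - a 0 - a 1 - a (p + 3)"
  proof -
    have "(\<Sum>k<Suc (Suc (p + 2)). a k) = a 0 + a 1 + (\<Sum>k<p + 2. a (Suc (Suc k)))"
      by (simp only: sum.lessThan_Suc_shift) simp
    then show ?thesis by (simp add: numeral_eq_Suc)
  qed
  finally have sum_eq: "(\<Sum>j<Suc p. a (dist_Gp p j (p + 2)))
      = (\<Sum>k<p + 4. a k) - a 0 - a 1 - a (p + 3)" .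
  show ?thesis
    unfolding cent_Gp_split_sources[of p a "p + 2"] sum_eq by (simp add: dist_Gp_def numeral_eq_Suc)
qed

lemma cent_Gp_p_plus_3: "cent_Gp p a (p + 3) = a 1 + (\<Sum>k<p + 3. a k)"
proof -
  have "(\<Sum>j<Suc p. a (dist_Gp p j (p + 3))) = (\<Sum>j<Suc p. a (Suc p - Suc j + 1))"
    by (intro sum.cong refl) (auto simp: dist_Gp_def Suc_diff_le)
  also have "\<dots> = (\<Sum>k<Suc p. a (k + 1))"
    by (rule sum.nat_diff_reindex)
  also have "\<dots> = (\<Sum>k<p + 3. a k) - a 0 - a (p + 2)"
  proof -
    have "(\<Sum>k<Suc (p + 2). a k) = a 0 + (\<Sum>k<p + 2. a (Suc k))"
      by (simp only: sum.lessThan_Suc_shift)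
    then show ?thesis by (simp add: numeral_eq_Suc)
  qed
  finally have sum_eq: "(\<Sum>j<Suc p. a (dist_Gp p j (p + 3))) = (\<Sum>k<p + 3. a k) - a 0 - a (p + 2)" .
  show ?thesis
    unfolding cent_Gp_split_sources[of p a "p + 3"] sum_eq by (simp add: dist_Gp_def)
qed

lemma cent_Gp_Suc:
  assumes "m \<le> p + 1"
  shows "cent_Gp p a (Suc m) = cent_Gp p a m + real (p + 2 - m) * (a (m + 2) - a (m + 1))"
proof (cases "m \<le> p")
  case True
  then have "real (p + 3 - m) = real (p + 2 - m) + 1" by simp
  then show ?thesis using True cent_Gp_path[of m p a] cent_Gp_path[of "Suc m" p a]
    by (simp add: algebra_simps)
next
  case False
  then have "m = p + 1" using assms by simp
  then show ?thesis using cent_Gp_path[of "p + 1" p a] cent_Gp_p_plus_2[of p a]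
    by (simp add: numeral_eq_Suc)
qed

text \<open>The tail sums \<open>\<Sum>k\<ge>i. w\<^sub>k\<close> of the weights \<open>w\<^sub>0 = 1 / (p + 2)\<close> and
  \<open>w\<^sub>i = 1 / ((p + 2 - i) (p + 3 - i))\<close> for \<open>1 \<le> i \<le> p + 1\<close> that express \<open>F(p + 3)\<close>
  through \<open>F(0), \<dots>, F(p + 1)\<close>.\<close>

definition cum_weight :: "nat \<Rightarrow> nat \<Rightarrow> real" where
  "cum_weight p i = (if i = 0 then 1 else 1 - 1 / real (p + 3 - i))"

lemma cum_weight_decreasing: "i \<le> p + 1 \<Longrightarrow> cum_weight p (Suc i) < cum_weight p i"
  by (auto simp: cum_weight_def frac_less2)

definition last_weight :: "nat \<Rightarrow> nat \<Rightarrow> real" where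
  "last_weight p i = cum_weight p i - cum_weight p (Suc i)"

lemma last_weight_pos: "i < p + 2 \<Longrightarrow> 0 < last_weight p i"
  using cum_weight_decreasing[of i p] by (simp add: last_weight_def)

lemma sum_last_weight: "(\<Sum>i<p + 2. last_weight p i) = 1"
  unfolding last_weight_def sum_lessThan_telescope' by (simp add: cum_weight_def)

lemma cent_Gp_p_plus_3_convex_combination:
  "cent_Gp p a (p + 3) = (\<Sum>i<p + 2. last_weight p i * cent_Gp p a i)"
proof -
  have increment: "cum_weight p (Suc i) * (cent_Gp p a (Suc i) - cent_Gp p a i)
      = real (p + 1 - i) * (a (Suc (Suc i)) - a (Suc i))" if "i < p + 1" for i
  proof -
    have "real (p + 2 - i) > 0" "real (p + 1 - i) = real (p + 2 - i) - 1" using that by auto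
    then show ?thesis using that by (simp add: cent_Gp_Suc cum_weight_def field_simps)
  qed
  have "(\<Sum>i<Suc (p + 1). (cum_weight p i - cum_weight p (Suc i)) * cent_Gp p a i)
      = cum_weight p 0 * cent_Gp p a 0
        + (\<Sum>i<p + 1. cum_weight p (Suc i) * (cent_Gp p a (Suc i) - cent_Gp p a i))
        - cum_weight p (Suc (p + 1)) * cent_Gp p a (p + 1)"
    by (rule sum_by_parts)
  also have "\<dots> = cent_Gp p a 0 + (\<Sum>i<p + 1. real (p + 1 - i) * (a (Suc (Suc i)) - a (Suc i)))"
    using increment by (simp add: cum_weight_def)
  also have "\<dots> = a 0 + 2 * a 1 + (\<Sum>i<p + 1. a (Suc (Suc i)))"
    unfolding sum_weighted_increments[of "p + 1" "\<lambda>k. a (Suc k)"]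
    by (simp add: cent_Gp_path algebra_simps)
  also have "\<dots> = cent_Gp p a (p + 3)"
  proof -
    have "p + 3 = Suc (Suc (p + 1))" by simp
    then have "(\<Sum>k<p + 3. a k) = a 0 + a 1 + (\<Sum>k<p + 1. a (Suc (Suc k)))"
      by (simp only: sum.lessThan_Suc_shift) simp
    then show ?thesis unfolding cent_Gp_p_plus_3 by simp
  qed
  finally show ?thesis unfolding last_weight_def by (simp add: numeral_eq_Suc)
qed

lemma cent_Gp_prescribable: "\<exists>a. \<forall>i \<le> p + 2. cent_Gp p a i = y i"
proof
  \<comment> \<open>solves the triangular system given by \<open>cent_Gp_path\<close> at 0 and \<open>cent_Gp_Suc\<close>\<close>
  define a where "a k = (\<Sum>m<k. (y m - (if m = 0 then 0 else y (m - 1))) / real (p + 3 - m))" for k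
  show "\<forall>i \<le> p + 2. cent_Gp p a i = y i"
  proof (intro allI impI)
    fix i assume "i \<le> p + 2"
    then show "cent_Gp p a i = y i"
    proof (induction i)
      case 0
      then show ?case by (simp add: cent_Gp_path a_def)
    next
      case (Suc m)
      have "a (Suc (Suc m)) - a (Suc m) = (y (Suc m) - y m) / real (p + 2 - m)"
        by (simp add: a_def)
      moreover have "real (p + 2 - m) > 0" using Suc.prems by simp
      ultimately show ?case using Suc by (simp add: cent_Gp_Suc)
    qed
  qed
qed

lemma inP_iff_last_between:
  assumes "\<pi> permutes {..<p + 4}"
  shows "inP (p + 4) \<pi> \<longleftrightarrow>
    (\<exists>j \<le> p + 1. inv \<pi> j < inv \<pi> (p + 3)) \<and> (\<exists>j \<le> p + 1. inv \<pi> (p + 3) < inv \<pi> j)"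
proof -
  let ?\<rho> = "inv \<pi>"
  define r s where "r = ?\<rho> (p + 3)" and "s = ?\<rho> (p + 2)"
  have \<rho>: "?\<rho> permutes {..<p + 4}" using permutes_inv[OF assms] .
  have "r \<noteq> s" "r < p + 4" "s < p + 4"
    unfolding r_def s_def using permutes_in_image[OF \<rho>]
    by (simp_all add: permutes_inv_eq[OF assms] permutes_inverses[OF assms])
  have "{..p + 1} = {..<p + 4} - {p + 2, p + 3}" by auto
  then have path_image: "?\<rho> ` {..p + 1} = {..<p + 4} - {s, r}"
    unfolding r_def s_def using permutes_inj[OF \<rho>] by (simp add: image_set_diff permutes_image[OF \<rho>])
  have path_ranks: "(\<exists>j \<le> p + 1. P (?\<rho> j)) \<longleftrightarrow> (\<exists>q < p + 4. q \<noteq> s \<and> q \<noteq> r \<and> P q)" for P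
  proof -
    have "(\<exists>j \<le> p + 1. P (?\<rho> j)) \<longleftrightarrow> (\<exists>q \<in> ?\<rho> ` {..p + 1}. P q)" by auto
    then show ?thesis unfolding path_image by auto
  qed
  have "p + 4 - 1 = p + 3" "p + 4 - 2 = p + 2" by simp_all
  then have "inP (p + 4) \<pi> \<longleftrightarrow>
      (2 \<le> r \<and> r + 3 \<le> p + 4) \<or> (r = 1 \<and> s \<noteq> 0) \<or> (r = p + 2 \<and> s \<noteq> p + 3)"
    unfolding inP_def Let_def r_def s_def by (simp only:)
  also have "\<dots> \<longleftrightarrow>
      (\<exists>q < p + 4. q \<noteq> s \<and> q \<noteq> r \<and> q < r) \<and> (\<exists>q < p + 4. q \<noteq> s \<and> q \<noteq> r \<and> r < q)"
    using \<open>r \<noteq> s\<close> \<open>r < p + 4\<close> \<open>s < p + 4\<close> by presburger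
  also have "\<dots> \<longleftrightarrow> (\<exists>j \<le> p + 1. ?\<rho> j < r) \<and> (\<exists>j \<le> p + 1. r < ?\<rho> j)"
    by (simp only: path_ranks[of "\<lambda>q. q < r"] path_ranks[of "\<lambda>q. r < q"])
  finally show ?thesis unfolding r_def .
qed

lemma last_between_if_ranked:
  assumes "\<pi> permutes {..<p + 4}"
    and ranked: "\<forall>v<p + 4. \<forall>w<p + 4. inv \<pi> v < inv \<pi> w \<longrightarrow> cent_Gp p a w < cent_Gp p a v"
  shows "(\<exists>j \<le> p + 1. inv \<pi> j < inv \<pi> (p + 3)) \<and> (\<exists>j \<le> p + 1. inv \<pi> (p + 3) < inv \<pi> j)"
proof -
  have ranks_differ: "inv \<pi> j \<noteq> inv \<pi> (p + 3)" if "j \<le> p + 1" for j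
    using that by (simp add: permutes_inv_eq[OF assms(1)] permutes_inverses[OF assms(1)])
  show ?thesis
  proof (intro conjI; rule ccontr)
    assume none_above: "\<not> (\<exists>j \<le> p + 1. inv \<pi> j < inv \<pi> (p + 3))"
    have "cent_Gp p a j < cent_Gp p a (p + 3)" if "j \<le> p + 1" for j
    proof -
      have "inv \<pi> (p + 3) < inv \<pi> j" using none_above ranks_differ[OF that] that by force
      then show ?thesis using ranked that by simp
    qed
    then have "(\<Sum>i<p + 2. last_weight p i * cent_Gp p a i) < cent_Gp p a (p + 3)"
      using last_weight_pos sum_last_weight
      by (intro convex_sum_less[where k = 0]) (auto intro: less_imp_le)
    then show False using cent_Gp_p_plus_3_convex_combination[of p a] by linarith
  next
    assume none_below: "\<not> (\<exists>j \<le> p + 1. inv \<pi> (p + 3) < inv \<pi> j)"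
    have "cent_Gp p a (p + 3) < cent_Gp p a j" if "j \<le> p + 1" for j
    proof -
      have "inv \<pi> j < inv \<pi> (p + 3)" using none_below ranks_differ[OF that] that by force
      then show ?thesis using ranked that by simp
    qed
    then have "cent_Gp p a (p + 3) < (\<Sum>i<p + 2. last_weight p i * cent_Gp p a i)"
      using last_weight_pos sum_last_weight
      by (intro convex_sum_greater[where k = 0]) (auto intro: less_imp_le)
    then show False using cent_Gp_p_plus_3_convex_combination[of p a] by linarith
  qed
qed

lemma ranked_if_last_between:
  assumes "\<pi> permutes {..<p + 4}"
    and "j1 \<le> p + 1" "inv \<pi> j1 < inv \<pi> (p + 3)" and "j2 \<le> p + 1" "inv \<pi> (p + 3) < inv \<pi> j2"
  shows "\<exists>a. \<forall>v<p + 4. \<forall>w<p + 4. inv \<pi> v < inv \<pi> w \<longrightarrow> cent_Gp p a w < cent_Gp p a v"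
proof -
  let ?\<rho> = "inv \<pi>"
  define N where "N = real (p + 4)"
  \<comment> \<open>Node \<open>v \<le> p + 2\<close> gets the value \<open>M * above v - \<rho> v\<close>.  Then
    \<open>F(p + 3) = M * mass_above - mean_rank\<close> with \<open>0 < mass_above < 1\<close>, so for large \<open>M\<close>
    it lies strictly between the nodes ranked above and below \<open>p + 3\<close>.\<close>
  define above :: "nat \<Rightarrow> real" where "above v = (if ?\<rho> v < ?\<rho> (p + 3) then 1 else 0)" for v
  define mean_rank where "mean_rank = (\<Sum>i<p + 2. last_weight p i * real (?\<rho> i))"
  define mass_above where "mass_above = (\<Sum>i<p + 2. last_weight p i * above i)"
  have rank_less: "real (?\<rho> v) < N" if "v < p + 4" for v
    using that permutes_in_image[OF permutes_inv[OF assms(1)]] unfolding N_def of_nat_less_iff by simp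
  have "0 \<le> mean_rank" "mean_rank \<le> N"
    using convex_sum_bounds[of "{..<p + 2}" "last_weight p" 0 "\<lambda>i. real (?\<rho> i)" N]
      last_weight_pos sum_last_weight rank_less
    by (auto simp: mean_rank_def less_imp_le)
  have "0 < mass_above"
    unfolding mass_above_def using last_weight_pos sum_last_weight assms(2,3)
    by (intro convex_sum_greater[where k = j1]) (auto simp: above_def)
  have "mass_above < 1"
    unfolding mass_above_def using last_weight_pos sum_last_weight assms(4,5)
    by (intro convex_sum_less[where k = j2]) (auto simp: above_def)
  define M where "M = max (N / mass_above) (N / (1 - mass_above)) + 1"
  have M_bounds: "N / mass_above < M" "N / (1 - mass_above) < M" "0 < N / mass_above"
    using \<open>0 < mass_above\<close> by (auto simp: M_def N_def)
  then have "0 < M" by linarith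
  have "N < M * mass_above" using M_bounds(1) \<open>0 < mass_above\<close> by (simp add: pos_divide_less_eq)
  have "N < M * (1 - mass_above)" using M_bounds(2) \<open>mass_above < 1\<close> by (simp add: pos_divide_less_eq)
  obtain a where a: "\<forall>i \<le> p + 2. cent_Gp p a i = M * above i - real (?\<rho> i)"
    using cent_Gp_prescribable[of p "\<lambda>i. M * above i - real (?\<rho> i)"] by blast
  have "cent_Gp p a (p + 3) = (\<Sum>i<p + 2. last_weight p i * (M * above i - real (?\<rho> i)))"
    using a by (simp add: cent_Gp_p_plus_3_convex_combination)
  also have "\<dots> = M * mass_above - mean_rank"
    by (simp add: mean_rank_def mass_above_def algebra_simps sum_subtractf sum_distrib_left)
  finally have cent_last: "cent_Gp p a (p + 3) = M * mass_above - mean_rank" .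
  show ?thesis
  proof (intro exI allI impI)
    fix v w assume "v < p + 4" "w < p + 4" and vw: "?\<rho> v < ?\<rho> w"
    then have "v \<noteq> w" by blast
    with \<open>v < p + 4\<close> \<open>w < p + 4\<close>
    consider "v = p + 3" "w \<le> p + 2" | "w = p + 3" "v \<le> p + 2" | "v \<le> p + 2" "w \<le> p + 2"
      by linarith
    then show "cent_Gp p a w < cent_Gp p a v"
    proof cases
      case 1
      then show ?thesis using a cent_last vw \<open>N < M * mass_above\<close> \<open>mean_rank \<le> N\<close>
        by (simp add: above_def)
    next
      case 2
      then have "cent_Gp p a v = M - real (?\<rho> v)" using a vw by (simp add: above_def)
      then show ?thesis
        using 2 cent_last rank_less[OF \<open>v < p + 4\<close>] \<open>N < M * (1 - mass_above)\<close> \<open>0 \<le> mean_rank\<close>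
        by (simp add: algebra_simps)
    next
      case 3
      then show ?thesis using a vw \<open>0 < M\<close> by (auto simp: above_def)
    qed
  qed
qed

theorem theorem8:
  fixes n :: nat and \<pi> :: "nat \<Rightarrow> nat"
  assumes "n \<ge> 4" and "\<pi> permutes {..<n}"
  shows "inP n \<pi> \<longleftrightarrow> representable (Gp n) n \<pi>"
proof -
  obtain p where n: "n = p + 4" using assms(1) by (metis le_add_diff_inverse2)
  have \<pi>: "\<pi> permutes {..<p + 4}" using assms(2) n by simp
  have "representable (Gp n) n \<pi> \<longleftrightarrow>
      (\<exists>a. \<forall>v<p + 4. \<forall>w<p + 4. inv \<pi> v < inv \<pi> w \<longrightarrow> cent_Gp p a w < cent_Gp p a v)"
    unfolding n representable_iff_ranking[OF \<pi>] by (simp add: lincent_Gp)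
  moreover have "inP n \<pi> \<longleftrightarrow>
      (\<exists>j \<le> p + 1. inv \<pi> j < inv \<pi> (p + 3)) \<and> (\<exists>j \<le> p + 1. inv \<pi> (p + 3) < inv \<pi> j)"
    unfolding n by (rule inP_iff_last_between[OF \<pi>])
  ultimately show ?thesis
    using last_between_if_ranked[OF \<pi>] ranked_if_last_between[OF \<pi>] by blast
qed

end
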